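(* For every $m \ge 1$, the quotient $TW_{m+2}'/TW_{m+2}''$ is isomorphic to the free abelian group $\mathbb Z^{2m-1}$. In particular, $TW_{m+2}'$ is not perfect for any $m \ge 1$.
   Context: For $n \ge 2$, the twin group $TW_n$ is the group with generators $\tau_1,\dots,\tau_{n-1}$ and defining relations $\tau_i^2=1$ for all $i$, and $\tau_i\tau_j=\tau_j\tau_i$ whenever $|i-j|>1$. $G'$ denotes the commutator subgroup of a group $G$ and $G''=(G')'$. *)

theory Defs
  imports "HOL-Algebra.Algebra"
begin

text \<open>The twin group TW_n, given by its presentation: generators tau_1, ..., tau_(n-1),
  relations tau_i^2 = 1 and tau_i tau_j = tau_j tau_i for |i - j| > 1.
  Elements are equivalence classes of words (lists of generator indices in {1..n-1})
  modulo the congruence generated by the defining relations.\<close>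

definition tw_words :: "nat \<Rightarrow> nat list set" where
  "tw_words n = {w. set w \<subseteq> {1..<n}}"

definition tw_step :: "nat \<Rightarrow> (nat list \<times> nat list) set" where
  "tw_step n =
     {(u @ [i, i] @ v, u @ v) | u v i. i \<in> {1..<n} \<and> u \<in> tw_words n \<and> v \<in> tw_words n}
   \<union> {(u @ [i, j] @ v, u @ [j, i] @ v) | u v i j.
        i \<in> {1..<n} \<and> j \<in> {1..<n} \<and> (i + 1 < j \<or> j + 1 < i)
        \<and> u \<in> tw_words n \<and> v \<in> tw_words n}"

definition tw_rel :: "nat \<Rightarrow> (nat list \<times> nat list) set" where
  "tw_rel n = (tw_step n \<union> (tw_step n)\<inverse>)\<^sup>* \<inter> (tw_words n \<times> tw_words n)"

definition twin_group :: "nat \<Rightarrow> nat list set monoid" where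
  "twin_group n =
     \<lparr>carrier = tw_words n // tw_rel n,
      monoid.mult = (\<lambda>A B. \<Union>a\<in>A. \<Union>b\<in>B. tw_rel n `` {a @ b}),
      one = tw_rel n `` {[]}\<rparr>"

text \<open>Commutator subgroup G' = derived G (carrier G); G'' = derived G G'.\<close>

end

theory Submission
  imports Defs
begin

text \<open>
  Let \<open>n = m + 2\<close>, \<open>x\<^sub>i = (\<tau>\<^sub>i\<tau>\<^sub>i\<^sub>+\<^sub>1)\<^sup>2\<close> for \<open>1 \<le> i \<le> m\<close> and
  \<open>y\<^sub>k = \<tau>\<^sub>k x\<^sub>k\<^sub>+\<^sub>1 \<tau>\<^sub>k x\<^sub>k\<^sub>+\<^sub>1\<^sup>-\<^sup>1\<close> for \<open>1 \<le> k < m\<close>; these \<open>2m - 1\<close> elements lie in \<open>TW\<^sub>n'\<close>.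
  Each commutator \<open>[\<tau>\<^sub>i, \<tau>\<^sub>j]\<close> is trivial or \<open>x\<^sub>m\<^sub>i\<^sub>n\<^sub>(\<^sub>i\<^sub>,\<^sub>j\<^sub>)\<^sup>\<plusminus>\<^sup>1\<close>, and a few word identities show that,
  modulo \<open>TW\<^sub>n''\<close>, conjugation by any \<open>\<tau>\<^sub>l\<close> maps the \<open>x\<^sub>i\<close> and \<open>y\<^sub>k\<close> into the subgroup they
  generate. As \<open>TW\<^sub>n'\<close> is the normal closure of the commutators of the generators, the \<open>x\<^sub>i\<close> and
  \<open>y\<^sub>k\<close> generate \<open>TW\<^sub>n'/TW\<^sub>n''\<close>.

  Conversely, reading a word from left to right while keeping track of which letters have occurred
  an odd number of times defines a homomorphism \<open>\<psi> : TW\<^sub>n' \<rightarrow> \<int>\<^sup>2\<^sup>m\<^sup>-\<^sup>1\<close>; it kills \<open>TW\<^sub>n''\<close> and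
  maps the \<open>x\<^sub>i\<close> and \<open>y\<^sub>k\<close> to the standard basis, so it induces the isomorphism.
\<close>

section \<open>The twin group as a quotient of words\<close>

lemma tw_words_Nil [simp]: "[] \<in> tw_words n"
  by (simp add: tw_words_def)

lemma tw_words_Cons [simp]: "i # w \<in> tw_words n \<longleftrightarrow> i \<in> {1..<n} \<and> w \<in> tw_words n"
  by (auto simp: tw_words_def)

lemma tw_words_append [simp]: "u @ w \<in> tw_words n \<longleftrightarrow> u \<in> tw_words n \<and> w \<in> tw_words n"
  by (auto simp: tw_words_def)

lemma tw_words_rev [simp]: "rev w \<in> tw_words n \<longleftrightarrow> w \<in> tw_words n"
  by (auto simp: tw_words_def)

lemma tw_step_append:
  assumes "(x, y) \<in> tw_step n" "z \<in> tw_words n"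
  shows "(x @ z, y @ z) \<in> tw_step n \<and> (z @ x, z @ y) \<in> tw_step n"
proof -
  { fix u v i assume c: "x = u @ [i, i] @ v" "y = u @ v" "i \<in> {1..<n}"
      "u \<in> tw_words n" "v \<in> tw_words n"
    have "(x @ z, y @ z) \<in> tw_step n"
      unfolding tw_step_def using c assms(2)
      by (intro UnI1 CollectI exI[of _ u] exI[of _ "v @ z"] exI[of _ i]) (auto simp: tw_words_def)
    moreover have "(z @ x, z @ y) \<in> tw_step n"
      unfolding tw_step_def using c assms(2)
      by (intro UnI1 CollectI exI[of _ "z @ u"] exI[of _ v] exI[of _ i]) (auto simp: tw_words_def)
    ultimately have ?thesis by blast }
  moreover
  { fix u v i j assume s: "x = u @ [i, j] @ v" "y = u @ [j, i] @ v" "i \<in> {1..<n}" "j \<in> {1..<n}"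
      "i + 1 < j \<or> j + 1 < i" "u \<in> tw_words n" "v \<in> tw_words n"
    have "(x @ z, y @ z) \<in> tw_step n"
      unfolding tw_step_def using s assms(2)
      by (intro UnI2 CollectI exI[of _ u] exI[of _ "v @ z"] exI[of _ i] exI[of _ j]) (auto simp: tw_words_def)
    moreover have "(z @ x, z @ y) \<in> tw_step n"
      unfolding tw_step_def using s assms(2)
      by (intro UnI2 CollectI exI[of _ "z @ u"] exI[of _ v] exI[of _ i] exI[of _ j]) (auto simp: tw_words_def)
    ultimately have ?thesis by blast }
  ultimately show ?thesis using assms(1) unfolding tw_step_def by blast
qed

abbreviation tw_sym :: "nat \<Rightarrow> (nat list \<times> nat list) set" where
  "tw_sym n \<equiv> tw_step n \<union> (tw_step n)\<inverse>"

lemma tw_sym_rtrancl_append_right: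
  assumes "(x, y) \<in> (tw_sym n)\<^sup>*" "z \<in> tw_words n"
  shows "(x @ z, y @ z) \<in> (tw_sym n)\<^sup>*"
  using assms(1)
proof (induction rule: rtrancl_induct)
  case (step y w)
  then show ?case using tw_step_append[OF _ assms(2)]
    by (meson UnE UnI1 UnI2 converse_iff rtrancl.rtrancl_into_rtrancl)
qed auto

lemma tw_sym_rtrancl_append_left:
  assumes "(x, y) \<in> (tw_sym n)\<^sup>*" "z \<in> tw_words n"
  shows "(z @ x, z @ y) \<in> (tw_sym n)\<^sup>*"
  using assms(1)
proof (induction rule: rtrancl_induct)
  case (step y w)
  then show ?case using tw_step_append[OF _ assms(2)]
    by (meson UnE UnI1 UnI2 converse_iff rtrancl.rtrancl_into_rtrancl)
qed auto

lemma tw_rel_iff: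
  "(x, y) \<in> tw_rel n \<longleftrightarrow> (x, y) \<in> (tw_sym n)\<^sup>* \<and> x \<in> tw_words n \<and> y \<in> tw_words n"
  by (auto simp: tw_rel_def)

lemma equiv_tw_rel: "equiv (tw_words n) (tw_rel n)"
proof (rule equivI)
  show "tw_rel n \<subseteq> tw_words n \<times> tw_words n" by (auto simp: tw_rel_def)
  show "refl_on (tw_words n) (tw_rel n)"
    unfolding tw_rel_def refl_on_def by blast
  show "sym (tw_rel n)"
    unfolding sym_def tw_rel_iff
    by (metis converse_Un converse_converse rtrancl_converseI sup_commute)
  show "trans (tw_rel n)"
    unfolding trans_def tw_rel_iff by (meson rtrancl_trans)
qed

lemma tw_rel_append:
  assumes "(a, b) \<in> tw_rel n" "(c, d) \<in> tw_rel n"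
  shows "(a @ c, b @ d) \<in> tw_rel n"
proof -
  have "(a @ c, b @ c) \<in> (tw_sym n)\<^sup>*"
    using assms tw_sym_rtrancl_append_right by (auto simp: tw_rel_iff)
  moreover have "(b @ c, b @ d) \<in> (tw_sym n)\<^sup>*"
    using assms tw_sym_rtrancl_append_left by (auto simp: tw_rel_iff)
  ultimately show ?thesis using assms by (auto simp: tw_rel_iff intro: rtrancl_trans)
qed

lemma tw_rel_rev_append_self: "w \<in> tw_words n \<Longrightarrow> (rev w @ w, []) \<in> tw_rel n"
proof (induction w)
  case (Cons i w)
  have "(rev w @ [i, i] @ w, rev w @ w) \<in> tw_step n"
    using Cons.prems unfolding tw_step_def
    by (intro UnI1 CollectI exI[of _ "rev w"] exI[of _ w] exI[of _ i]) auto
  then show ?case using Cons by (auto simp: tw_rel_iff intro: rtrancl_trans)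
qed (simp add: tw_rel_iff)

definition tw_class :: "nat \<Rightarrow> nat list \<Rightarrow> nat list set" where
  "tw_class n w = tw_rel n `` {w}"

lemma tw_class_eq_iff:
  "u \<in> tw_words n \<Longrightarrow> w \<in> tw_words n \<Longrightarrow> tw_class n u = tw_class n w \<longleftrightarrow> (u, w) \<in> tw_rel n"
  unfolding tw_class_def using equiv_class_eq_iff[OF equiv_tw_rel] by auto

lemma tw_class_self: "w \<in> tw_words n \<Longrightarrow> w \<in> tw_class n w"
  unfolding tw_class_def by (rule equiv_class_self[OF equiv_tw_rel])

lemma carrier_twin_group: "carrier (twin_group n) = tw_class n ` tw_words n"
  unfolding twin_group_def quotient_def tw_class_def by auto

lemma tw_class_in_carrier [simp]: "tw_class n w \<in> carrier (twin_group n) \<longleftrightarrow> w \<in> tw_words n"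
  by (metis carrier_twin_group image_eqI imageE tw_class_def tw_class_self tw_rel_iff
      Image_singleton_iff)

lemma twin_group_one: "\<one>\<^bsub>twin_group n\<^esub> = tw_class n []"
  unfolding twin_group_def tw_class_def by simp

lemma twin_group_mult:
  assumes "u \<in> tw_words n" "w \<in> tw_words n"
  shows "tw_class n u \<otimes>\<^bsub>twin_group n\<^esub> tw_class n w = tw_class n (u @ w)"
proof -
  have "tw_rel n `` {u' @ w'} = tw_class n (u @ w)"
    if "u' \<in> tw_class n u" "w' \<in> tw_class n w" for u' w'
  proof -
    have "(u @ w, u' @ w') \<in> tw_rel n"
      using that tw_rel_append by (simp add: tw_class_def)
    then show ?thesis unfolding tw_class_def by (metis equiv_class_eq[OF equiv_tw_rel])
  qed
  moreover have "u \<in> tw_class n u" "w \<in> tw_class n w" using assms tw_class_self by auto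
  ultimately show ?thesis unfolding twin_group_def by auto
qed

lemma group_twin_group: "group (twin_group n)"
proof (rule groupI)
  fix x assume "x \<in> carrier (twin_group n)"
  then obtain w where w: "w \<in> tw_words n" "x = tw_class n w" by (auto simp: carrier_twin_group)
  then have "tw_class n (rev w) \<otimes>\<^bsub>twin_group n\<^esub> x = \<one>\<^bsub>twin_group n\<^esub>"
    using tw_rel_rev_append_self[of w n] by (simp add: twin_group_mult twin_group_one tw_class_eq_iff)
  then show "\<exists>y\<in>carrier (twin_group n). y \<otimes>\<^bsub>twin_group n\<^esub> x = \<one>\<^bsub>twin_group n\<^esub>"
    using w by force
qed (auto simp: carrier_twin_group twin_group_mult twin_group_one)

lemma twin_group_inv:
  assumes "w \<in> tw_words n"
  shows "inv\<^bsub>twin_group n\<^esub> (tw_class n w) = tw_class n (rev w)"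
proof -
  have "tw_class n (rev w) \<otimes>\<^bsub>twin_group n\<^esub> tw_class n w = \<one>\<^bsub>twin_group n\<^esub>"
    using tw_rel_rev_append_self[OF assms] assms
    by (simp add: twin_group_mult twin_group_one tw_class_eq_iff)
  then show ?thesis
    by (rule group.inv_equality[OF group_twin_group]) (use assms in simp_all)
qed

lemma tw_class_cancel:
  assumes "u \<in> tw_words n" "w \<in> tw_words n" "i \<in> {1..<n}"
  shows "tw_class n (u @ i # i # w) = tw_class n (u @ w)"
proof -
  have "(u @ [i, i] @ w, u @ w) \<in> tw_step n"
    using assms unfolding tw_step_def by blast
  then show ?thesis using assms by (subst tw_class_eq_iff) (auto simp: tw_rel_iff)
qed

lemma tw_class_swap:
  assumes "u \<in> tw_words n" "w \<in> tw_words n" "i \<in> {1..<n}" "j \<in> {1..<n}" "i + 1 < j \<or> j + 1 < i"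
  shows "tw_class n (u @ i # j # w) = tw_class n (u @ j # i # w)"
proof -
  have "(u @ [i, j] @ w, u @ [j, i] @ w) \<in> tw_step n"
    using assms unfolding tw_step_def by blast
  then show ?thesis using assms by (subst tw_class_eq_iff) (auto simp: tw_rel_iff)
qed

lemma tw_class_cancel_at:
  assumes "w \<in> tw_words n" "Suc p < length w" "w ! p = w ! Suc p"
    and "w' = take p w @ drop (Suc (Suc p)) w"
  shows "tw_class n w = tw_class n w'"
proof -
  have w: "w = take p w @ w ! p # w ! Suc p # drop (Suc (Suc p)) w"
    using assms(2) by (simp add: Cons_nth_drop_Suc)
  have "set w \<subseteq> {1..<n}" using assms(1) by (simp add: tw_words_def)
  then have "w ! p \<in> {1..<n}" using assms(2) by (meson Suc_lessD nth_mem subsetD)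
  moreover have "take p w \<in> tw_words n" "drop (Suc (Suc p)) w \<in> tw_words n"
    using assms(1) by (metis append_take_drop_id tw_words_append)+
  ultimately show ?thesis
    using tw_class_cancel w assms(3,4) by metis
qed

lemma tw_class_swap_at:
  assumes "w \<in> tw_words n" "Suc p < length w" "w ! p + 1 < w ! Suc p \<or> w ! Suc p + 1 < w ! p"
    and "w' = take p w @ w ! Suc p # w ! p # drop (Suc (Suc p)) w"
  shows "tw_class n w = tw_class n w'"
proof -
  have w: "w = take p w @ w ! p # w ! Suc p # drop (Suc (Suc p)) w"
    using assms(2) by (simp add: Cons_nth_drop_Suc)
  have "set w \<subseteq> {1..<n}" using assms(1) by (simp add: tw_words_def)
  then have "w ! p \<in> {1..<n}" "w ! Suc p \<in> {1..<n}"
    using assms(2) by (meson Suc_lessD nth_mem subsetD)+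
  moreover have "take p w \<in> tw_words n" "drop (Suc (Suc p)) w \<in> tw_words n"
    using assms(1) by (metis append_take_drop_id tw_words_append)+
  ultimately show ?thesis
    using tw_class_swap w assms(3,4) by metis
qed

definition tw_gen :: "nat \<Rightarrow> nat \<Rightarrow> nat list set" where
  "tw_gen n i = tw_class n [i]"

lemma tw_gen_carrier: "i \<in> {1..<n} \<Longrightarrow> tw_gen n i \<in> carrier (twin_group n)"
  by (simp add: tw_gen_def)

lemma tw_gen_inv: "i \<in> {1..<n} \<Longrightarrow> inv\<^bsub>twin_group n\<^esub> (tw_gen n i) = tw_gen n i"
  by (simp add: tw_gen_def twin_group_inv)

lemma tw_class_Cons:
  "i \<in> {1..<n} \<Longrightarrow> w \<in> tw_words n \<Longrightarrow> tw_class n (i # w) = tw_gen n i \<otimes>\<^bsub>twin_group n\<^esub> tw_class n w"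
  by (simp add: tw_gen_def twin_group_mult)

lemma generate_tw_gen: "generate (twin_group n) (tw_gen n ` {1..<n}) = carrier (twin_group n)"
proof
  have "tw_gen n ` {1..<n} \<subseteq> carrier (twin_group n)"
    using tw_gen_carrier by blast
  then show "generate (twin_group n) (tw_gen n ` {1..<n}) \<subseteq> carrier (twin_group n)"
    using group.generate_in_carrier[OF group_twin_group] by blast
  have "tw_class n w \<in> generate (twin_group n) (tw_gen n ` {1..<n})" if "w \<in> tw_words n" for w
    using that
  proof (induction w)
    case Nil
    show ?case unfolding twin_group_one[symmetric] by (rule generate.one)
  next
    case (Cons i w)
    then have "i \<in> {1..<n}" "w \<in> tw_words n" by simp_all
    then show ?case
      unfolding tw_class_Cons[OF \<open>i \<in> {1..<n}\<close> \<open>w \<in> tw_words n\<close>]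
      using Cons.IH by (blast intro: generate.eng generate.incl)
  qed
  then show "carrier (twin_group n) \<subseteq> generate (twin_group n) (tw_gen n ` {1..<n})"
    by (auto simp: carrier_twin_group)
qed

section \<open>Commutator calculus\<close>

context group
begin

lemma mult_inv_cancel_left: "x \<in> carrier G \<Longrightarrow> y \<in> carrier G \<Longrightarrow> x \<otimes> (inv x \<otimes> y) = y"
  by (simp add: m_assoc[symmetric])

lemma inv_mult_cancel_left: "x \<in> carrier G \<Longrightarrow> y \<in> carrier G \<Longrightarrow> inv x \<otimes> (x \<otimes> y) = y"
  by (simp add: m_assoc[symmetric])

lemma commutator_mult_right:
  assumes "x \<in> carrier G" "y \<in> carrier G" "z \<in> carrier G"
  shows "x \<otimes> (y \<otimes> z) \<otimes> inv x \<otimes> inv (y \<otimes> z)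
    = (x \<otimes> y \<otimes> inv x \<otimes> inv y) \<otimes> (y \<otimes> (x \<otimes> z \<otimes> inv x \<otimes> inv z) \<otimes> inv y)"
  using assms by (simp add: m_assoc inv_mult_group mult_inv_cancel_left inv_mult_cancel_left)

lemma commutator_mult_left:
  assumes "x \<in> carrier G" "y \<in> carrier G" "z \<in> carrier G"
  shows "x \<otimes> y \<otimes> z \<otimes> inv (x \<otimes> y) \<otimes> inv z
    = (x \<otimes> (y \<otimes> z \<otimes> inv y \<otimes> inv z) \<otimes> inv x) \<otimes> (x \<otimes> z \<otimes> inv x \<otimes> inv z)"
  using assms by (simp add: m_assoc inv_mult_group mult_inv_cancel_left inv_mult_cancel_left)

lemma commutator_inv_left:
  assumes "x \<in> carrier G" "y \<in> carrier G"
  shows "inv x \<otimes> y \<otimes> x \<otimes> inv y = inv x \<otimes> inv (x \<otimes> y \<otimes> inv x \<otimes> inv y) \<otimes> x"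
  using assms by (simp add: m_assoc inv_mult_group inv_mult_cancel_left)

lemma commutator_inv_right:
  assumes "x \<in> carrier G" "y \<in> carrier G"
  shows "x \<otimes> inv y \<otimes> inv x \<otimes> y = inv y \<otimes> inv (x \<otimes> y \<otimes> inv x \<otimes> inv y) \<otimes> y"
  using assms by (simp add: m_assoc inv_mult_group inv_mult_cancel_left)

lemma generate_conj_closed:
  assumes T: "subgroup T G" and S: "S \<subseteq> carrier G"
    and conj: "\<And>s y. s \<in> S \<Longrightarrow> y \<in> T \<Longrightarrow> s \<otimes> y \<otimes> inv s \<in> T"
      "\<And>s y. s \<in> S \<Longrightarrow> y \<in> T \<Longrightarrow> inv s \<otimes> y \<otimes> s \<in> T"
    and g: "g \<in> generate G S" and y: "y \<in> T"
  shows "g \<otimes> y \<otimes> inv g \<in> T"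
  using g y
proof (induction g arbitrary: y)
  case (eng g h)
  then have "g \<otimes> (h \<otimes> y \<otimes> inv h) \<otimes> inv g \<in> T" by blast
  then show ?case
    using eng.prems generate_in_carrier[OF S eng.hyps(1)] generate_in_carrier[OF S eng.hyps(2)]
      subgroup.mem_carrier[OF T]
    by (simp add: m_assoc inv_mult_group)
qed (use conj S subgroup.mem_carrier[OF T] in \<open>auto simp: subsetD\<close>)

lemma derived_subset_normal_closure:
  assumes T: "subgroup T G" and S: "S \<subseteq> carrier G" "generate G S = carrier G"
    and conj: "\<And>s y. s \<in> S \<Longrightarrow> y \<in> T \<Longrightarrow> s \<otimes> y \<otimes> inv s \<in> T"
      "\<And>s y. s \<in> S \<Longrightarrow> y \<in> T \<Longrightarrow> inv s \<otimes> y \<otimes> s \<in> T"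
    and comm: "\<And>s t. s \<in> S \<Longrightarrow> t \<in> S \<Longrightarrow> s \<otimes> t \<otimes> inv s \<otimes> inv t \<in> T"
  shows "derived G (carrier G) \<subseteq> T"
proof -
  interpret T: subgroup T G by (rule T)
  have gen_carrier: "g \<in> carrier G" if "g \<in> generate G S" for g
    using that S(2) by simp
  have normal: "g \<otimes> y \<otimes> inv g \<in> T" if "g \<in> generate G S" "y \<in> T" for g y
    by (rule generate_conj_closed[OF T S(1)]) (use conj that in auto)
  have comm_gen: "s \<otimes> h \<otimes> inv s \<otimes> inv h \<in> T" if "s \<in> S" "h \<in> generate G S" for s h
    using that(2)
  proof (induction h)
    case (inv t)
    then show ?case
      using normal[OF generate.inv[OF inv] T.m_inv_closed[OF comm[OF that(1) inv]]] S(1) that(1)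
      by (simp add: commutator_inv_right subsetD)
  next
    case (eng h h')
    then show ?case
      using normal[OF eng.hyps(1)] S(1) that(1) gen_carrier[OF eng.hyps(1)] gen_carrier[OF eng.hyps(2)]
      by (simp add: commutator_mult_right subsetD)
  qed (use comm that S in \<open>auto simp: subsetD\<close>)
  have commutator: "g \<otimes> h \<otimes> inv g \<otimes> inv h \<in> T" if "g \<in> generate G S" "h \<in> carrier G" for g h
    using that(1)
  proof (induction g)
    case (incl s)
    then show ?case using comm_gen that(2) S(2) by blast
  next
    case (inv s)
    then show ?case
      using normal[OF generate.inv[OF inv] T.m_inv_closed[OF comm_gen[OF inv]]] S that(2)
      by (simp add: commutator_inv_left subsetD)
  next
    case (eng g g')
    then show ?case
      using normal[OF eng.hyps(1)] that(2) gen_carrier[OF eng.hyps(1)] gen_carrier[OF eng.hyps(2)]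
      by (simp add: commutator_mult_left)
  qed (use that in simp)
  have "derived_set G (carrier G) \<subseteq> T"
    using commutator S(2) by auto
  then show ?thesis
    unfolding derived_def by (rule generate_subgroup_incl[OF _ T])
qed

end

lemma (in group_hom) derived_subset_kernel:
  assumes "comm_group H"
  shows "derived G (carrier G) \<subseteq> kernel G H h"
  unfolding derived_def
proof (rule G.generate_subgroup_incl[OF _ subgroup_kernel])
  interpret H: comm_group H by (rule assms)
  show "derived_set G (carrier G) \<subseteq> kernel G H h"
  proof clarify
    fix x y assume xy: "x \<in> carrier G" "y \<in> carrier G"
    then have "h x \<otimes>\<^bsub>H\<^esub> h y \<otimes>\<^bsub>H\<^esub> inv\<^bsub>H\<^esub> h x \<otimes>\<^bsub>H\<^esub> inv\<^bsub>H\<^esub> h y = \<one>\<^bsub>H\<^esub>"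
      by (metis H.inv_closed H.m_assoc H.m_comm H.r_inv H.r_one hom_closed)
    then show "x \<otimes>\<^bsub>G\<^esub> y \<otimes>\<^bsub>G\<^esub> inv\<^bsub>G\<^esub> x \<otimes>\<^bsub>G\<^esub> inv\<^bsub>G\<^esub> y \<in> kernel G H h"
      using xy by (simp add: kernel_def)
  qed
qed

lemma (in comm_group) mult_inv_cancel_common_left:
  assumes "c \<in> carrier G" "a \<in> carrier G" "b \<in> carrier G"
  shows "c \<otimes> a \<otimes> inv (c \<otimes> b) = a \<otimes> inv b"
proof -
  have "c \<otimes> a \<otimes> inv (c \<otimes> b) = c \<otimes> (a \<otimes> (inv c \<otimes> inv b))"
    using assms by (simp add: inv_mult m_assoc)
  also have "\<dots> = c \<otimes> (inv c \<otimes> (a \<otimes> inv b))"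
    using assms by (simp add: m_lcomm)
  also have "\<dots> = a \<otimes> inv b"
    using assms by (simp add: m_assoc[symmetric])
  finally show ?thesis .
qed

section \<open>The quotient of the commutator subgroup by the second derived subgroup\<close>

locale derived_quotient = group G for G (structure)
begin

abbreviation "K \<equiv> derived G (carrier G)"
abbreviation "K2 \<equiv> derived G K"
abbreviation "H \<equiv> G\<lparr>carrier := K\<rparr>"
abbreviation "M \<equiv> H Mod K2"

definition q :: "'a \<Rightarrow> 'a set" where
  "q y = K2 #>\<^bsub>H\<^esub> y"

lemma K_normal: "K \<lhd> G"
  by (rule derived_self_is_normal)

lemma K_subgroup: "subgroup K G"
  using K_normal normal_def by blast

lemma K_carrier: "x \<in> K \<Longrightarrow> x \<in> carrier G"
  by (rule subgroup.mem_carrier[OF K_subgroup])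

lemma K_mult: "x \<in> K \<Longrightarrow> y \<in> K \<Longrightarrow> x \<otimes> y \<in> K"
  by (rule subgroup.m_closed[OF K_subgroup])

lemma K_inv: "x \<in> K \<Longrightarrow> inv x \<in> K"
  by (rule subgroup.m_inv_closed[OF K_subgroup])

lemma K_one: "\<one> \<in> K"
  by (rule subgroup.one_closed[OF K_subgroup])

lemma conj_in_K: "g \<in> carrier G \<Longrightarrow> x \<in> K \<Longrightarrow> g \<otimes> x \<otimes> inv g \<in> K"
  by (rule normal.inv_op_closed2[OF K_normal])

lemma commutator_in_K:
  "x \<in> carrier G \<Longrightarrow> y \<in> carrier G \<Longrightarrow> x \<otimes> y \<otimes> inv x \<otimes> inv y \<in> K"
  unfolding derived_def by (intro generate.incl) blast

lemma K2_normal: "K2 \<lhd> G"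
  by (rule derived_is_normal[OF K_normal])

lemma K2_subset_K: "K2 \<subseteq> K"
  by (rule derived_incl[OF subset_refl K_subgroup])

lemma commutator_in_K2: "x \<in> K \<Longrightarrow> y \<in> K \<Longrightarrow> x \<otimes> y \<otimes> inv x \<otimes> inv y \<in> K2"
  unfolding derived_def[of G K] by (intro generate.incl) blast

lemma group_H: "group H"
  by (rule subgroup_imp_group[OF K_subgroup])

lemma inv_H: "x \<in> K \<Longrightarrow> inv\<^bsub>H\<^esub> x = inv x"
  by (rule m_inv_consistent[OF K_subgroup])

lemma K2_normal_H: "K2 \<lhd> H"
  by (rule derived_subgroup_is_normal[OF K_subgroup])

lemma comm_group_M: "comm_group M"
  by (rule derived_quot_of_subgroup_is_comm_group[OF K_subgroup])

lemma q_group_hom: "group_hom H M q"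
  using normal.r_coset_hom_Mod[OF K2_normal_H] group_H comm_group_M
  unfolding q_def[abs_def] by (simp add: group_hom_def group_hom_axioms_def comm_group.axioms(2))

lemma q_closed: "x \<in> K \<Longrightarrow> q x \<in> carrier M"
  using group_hom.hom_closed[OF q_group_hom] by simp

lemma q_mult: "x \<in> K \<Longrightarrow> y \<in> K \<Longrightarrow> q (x \<otimes> y) = q x \<otimes>\<^bsub>M\<^esub> q y"
  using group_hom.hom_mult[OF q_group_hom] by simp

lemma q_inv: "x \<in> K \<Longrightarrow> q (inv x) = inv\<^bsub>M\<^esub> (q x)"
  using group_hom.hom_inv[OF q_group_hom] inv_H by simp

lemma q_mult_inv: "x \<in> K \<Longrightarrow> y \<in> K \<Longrightarrow> q (x \<otimes> inv y) = q x \<otimes>\<^bsub>M\<^esub> inv\<^bsub>M\<^esub> (q y)"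
  by (simp add: q_mult q_inv K_inv)

lemma q_one: "q \<one> = \<one>\<^bsub>M\<^esub>"
  using group_hom.hom_one[OF q_group_hom] by simp

lemma q_eq_iff:
  assumes "x \<in> K" "y \<in> K"
  shows "q x = q y \<longleftrightarrow> x \<otimes> inv y \<in> K2"
proof -
  interpret H: group H by (rule group_H)
  have K2_sub: "subgroup K2 H" by (rule normal_imp_subgroup[OF K2_normal_H])
  have xy: "x \<in> carrier G" "y \<in> carrier G" using assms K_carrier by auto
  show ?thesis
  proof
    assume "q x = q y"
    then have "x \<in> K2 #>\<^bsub>H\<^esub> y"
      using H.rcos_self[of x K2] assms K2_sub by (simp add: q_def)
    then obtain h where "h \<in> K2" "x = h \<otimes> y" unfolding r_coset_def by auto
    then show "x \<otimes> inv y \<in> K2" using xy K2_subset_K K_carrier by (auto simp: m_assoc)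
  next
    assume "x \<otimes> inv y \<in> K2"
    moreover have "x = (x \<otimes> inv y) \<otimes> y" using xy by (simp add: m_assoc)
    ultimately have "x \<in> K2 #>\<^bsub>H\<^esub> y" unfolding r_coset_def by auto
    then show "q x = q y"
      unfolding q_def using H.repr_independence[of x K2 y] assms K2_sub by simp
  qed
qed

lemma q_conj_cong:
  assumes "g \<in> carrier G" "x \<in> K" "y \<in> K" "q x = q y"
  shows "q (g \<otimes> x \<otimes> inv g) = q (g \<otimes> y \<otimes> inv g)"
proof -
  have xy: "x \<in> carrier G" "y \<in> carrier G" using assms K_carrier by auto
  have "g \<otimes> (x \<otimes> inv y) \<otimes> inv g \<in> K2"
    using assms q_eq_iff normal.inv_op_closed2[OF K2_normal] by blast
  moreover have "g \<otimes> (x \<otimes> inv y) \<otimes> inv g = (g \<otimes> x \<otimes> inv g) \<otimes> inv (g \<otimes> y \<otimes> inv g)"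
    using assms(1) xy by (simp add: m_assoc inv_mult_group inv_mult_cancel_left)
  ultimately show ?thesis using q_eq_iff conj_in_K assms by simp
qed

lemma q_conj_by_K:
  assumes "a \<in> K" "x \<in> K"
  shows "q (a \<otimes> x \<otimes> inv a) = q x"
proof -
  interpret M: comm_group M by (rule comm_group_M)
  have "q (a \<otimes> x \<otimes> inv a) = q a \<otimes>\<^bsub>M\<^esub> q x \<otimes>\<^bsub>M\<^esub> inv\<^bsub>M\<^esub> (q a)"
    using assms by (simp add: q_mult q_inv K_mult K_inv)
  also have "\<dots> = q x"
    using q_closed[OF assms(1)] q_closed[OF assms(2)]
    by (metis M.inv_closed M.m_assoc M.m_comm M.r_inv M.r_one)
  finally show ?thesis .
qed

lemma q_conj_commute:
  assumes "x \<in> K" "a \<in> carrier G" "b \<in> carrier G"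
  shows "q (a \<otimes> (b \<otimes> x \<otimes> inv b) \<otimes> inv a) = q (b \<otimes> (a \<otimes> x \<otimes> inv a) \<otimes> inv b)"
proof -
  define d where "d = a \<otimes> b \<otimes> inv a \<otimes> inv b"
  have "a \<otimes> (b \<otimes> x \<otimes> inv b) \<otimes> inv a = d \<otimes> (b \<otimes> (a \<otimes> x \<otimes> inv a) \<otimes> inv b) \<otimes> inv d"
    using assms K_carrier unfolding d_def
    by (simp add: m_assoc inv_mult_group mult_inv_cancel_left inv_mult_cancel_left)
  moreover have "d \<in> K" unfolding d_def by (rule commutator_in_K[OF assms(2,3)])
  ultimately show ?thesis
    using q_conj_by_K conj_in_K assms by simp
qed

end

section \<open>A homomorphism from the commutator subgroup onto \<open>\<int>\<^sup>2\<^sup>m\<^sup>-\<^sup>1\<close>\<close>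

definition even_word :: "nat list \<Rightarrow> bool" where
  "even_word w \<longleftrightarrow> (\<forall>i. even (count_list w i))"

lemma derived_twin_group_even_word:
  assumes "x \<in> derived (twin_group n) (carrier (twin_group n))"
  obtains w where "w \<in> tw_words n" "even_word w" "x = tw_class n w"
proof -
  let ?E = "tw_class n ` {w \<in> tw_words n. even_word w}"
  interpret TW: group "twin_group n" by (rule group_twin_group)
  have "subgroup ?E (twin_group n)"
  proof (rule TW.subgroupI)
    show "?E \<subseteq> carrier (twin_group n)" by auto
    have "tw_class n [] \<in> ?E" by (rule imageI) (simp add: even_word_def)
    then show "?E \<noteq> {}" by blast
  next
    fix a assume "a \<in> ?E"
    then show "inv\<^bsub>twin_group n\<^esub> a \<in> ?E"
      by (auto simp: twin_group_inv even_word_def intro!: image_eqI[of _ _ "rev w" for w])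
  next
    fix a b assume "a \<in> ?E" "b \<in> ?E"
    then show "a \<otimes>\<^bsub>twin_group n\<^esub> b \<in> ?E"
      by (auto simp: twin_group_mult even_word_def intro!: image_eqI[of _ _ "u @ w" for u w])
  qed
  moreover have "derived_set (twin_group n) (carrier (twin_group n)) \<subseteq> ?E"
    by (auto simp: carrier_twin_group twin_group_mult twin_group_inv even_word_def
        intro!: image_eqI[of _ _ "u @ w @ rev u @ rev w" for u w])
  ultimately have "derived (twin_group n) (carrier (twin_group n)) \<subseteq> ?E"
    unfolding derived_def by (rule TW.generate_subgroup_incl[rotated])
  then show thesis using assms that by blast
qed

text \<open>
  A parity state \<open>v\<close> records the generators read an odd number of times so far, i.e.\ the image
  of the prefix read in the abelianisation \<open>(\<int>/2)\<^sup>n\<^sup>-\<^sup>1\<close> of \<open>TW\<^sub>n\<close>.\<close>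

definition toggle :: "nat \<Rightarrow> nat set \<Rightarrow> nat set" where
  "toggle i v = (if i \<in> v then v - {i} else insert i v)"

definition parity_after :: "nat set \<Rightarrow> nat list \<Rightarrow> nat set" where
  "parity_after v w = {i. (i \<in> v) \<noteq> odd (count_list w i)}"

definition letter_value :: "nat \<Rightarrow> nat \<Rightarrow> nat set \<Rightarrow> (nat \<Rightarrow>\<^sub>0 int)" where
  "letter_value m i v =
     (if 2 \<le> i \<and> i \<le> m + 1 \<and> i - 1 \<in> v then frag_of (i - 2) else 0)
   - (if 2 \<le> i \<and> i \<le> m \<and> i - 1 \<in> v \<and> i + 1 \<in> v then frag_of (m + i - 2) else 0)"

fun word_value :: "nat \<Rightarrow> nat set \<Rightarrow> nat list \<Rightarrow> (nat \<Rightarrow>\<^sub>0 int)" where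
  "word_value m v [] = 0"
| "word_value m v (i # w) =
     (if i \<in> v then - letter_value m i v else letter_value m i v) + word_value m (toggle i v) w"

lemma parity_after_Cons: "parity_after v (i # w) = parity_after (toggle i v) w"
  by (auto simp: parity_after_def toggle_def)

lemma parity_after_even_word: "even_word w \<Longrightarrow> parity_after v w = v"
  by (auto simp: parity_after_def even_word_def)

lemma word_value_append:
  "word_value m v (u @ w) = word_value m v u + word_value m (parity_after v u) w"
proof (induction u arbitrary: v)
  case Nil
  then show ?case by (simp add: parity_after_def)
next
  case (Cons i u)
  then show ?case by (simp add: parity_after_Cons add.assoc)
qed

lemma letter_value_toggle:
  "j + 1 \<noteq> i \<Longrightarrow> j \<noteq> i + 1 \<Longrightarrow> letter_value m i (toggle j v) = letter_value m i v"
  unfolding letter_value_def toggle_def by (cases "2 \<le> i") auto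

lemma word_value_Cons_Cons:
  "word_value m v (i # j # w) = word_value m v [i, j] + word_value m (parity_after v [i, j]) w"
  using word_value_append[of m v "[i, j]" w] by (simp only: append.simps)

lemma word_value_cancel: "word_value m v (i # i # w) = word_value m v w"
proof -
  have "word_value m v [i, i] = 0" "parity_after v [i, i] = v"
    using letter_value_toggle[of i i m v] by (auto simp: parity_after_def toggle_def split: if_splits)
  then show ?thesis unfolding word_value_Cons_Cons[of m v i i w] by simp
qed

lemma word_value_swap:
  assumes "i + 1 < j \<or> j + 1 < i"
  shows "word_value m v (i # j # w) = word_value m v (j # i # w)"
proof -
  have "letter_value m j (toggle i v) = letter_value m j v"
    "letter_value m i (toggle j v) = letter_value m i v"
    using assms by (auto intro!: letter_value_toggle)
  then have "word_value m v [i, j] = word_value m v [j, i]"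
    using assms by (auto simp: toggle_def add_ac)
  moreover have "parity_after v [i, j] = parity_after v [j, i]"
    by (auto simp: parity_after_def)
  ultimately show ?thesis unfolding word_value_Cons_Cons[of m v i j w] word_value_Cons_Cons[of m v j i w]
    by simp
qed

lemma word_value_tw_step: "(u, w) \<in> tw_step n \<Longrightarrow> word_value m v u = word_value m v w"
  unfolding tw_step_def
  by (auto simp: word_value_append word_value_cancel word_value_swap simp del: word_value.simps)

lemma word_value_tw_rel: "(u, w) \<in> tw_rel n \<Longrightarrow> word_value m v u = word_value m v w"
proof -
  have "word_value m v u = word_value m v w" if "(u, w) \<in> (tw_sym n)\<^sup>*"
    using that
  proof (induction rule: rtrancl_induct)
    case (step y z)
    then show ?case using word_value_tw_step[of y z n m v] word_value_tw_step[of z y n m v] by auto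
  qed simp
  then show "(u, w) \<in> tw_rel n \<Longrightarrow> ?thesis" by (simp add: tw_rel_iff)
qed

lemma keys_word_value: "Poly_Mapping.keys (word_value m v w) \<subseteq> {..<2 * m - 1}"
proof (induction w arbitrary: v)
  case (Cons i w)
  have "Poly_Mapping.keys (letter_value m i v) \<subseteq> {..<2 * m - 1}"
    unfolding letter_value_def by (rule order_trans[OF keys_diff]) (auto simp: keys_frag_of)
  have "Poly_Mapping.keys (word_value m v (i # w)) \<subseteq>
      Poly_Mapping.keys (if i \<in> v then - letter_value m i v else letter_value m i v)
      \<union> Poly_Mapping.keys (word_value m (toggle i v) w)"
    by (simp only: word_value.simps keys_add)
  also have "\<dots> \<subseteq> {..<2 * m - 1}"
    using Cons[of "toggle i v"] \<open>Poly_Mapping.keys (letter_value m i v) \<subseteq> {..<2 * m - 1}\<close> by auto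
  finally show ?case .
qed simp

definition psi :: "nat \<Rightarrow> nat list set \<Rightarrow> (nat \<Rightarrow>\<^sub>0 int)" where
  "psi m x = word_value m {} (SOME w. w \<in> x)"

lemma psi_tw_class: "w \<in> tw_words n \<Longrightarrow> psi m (tw_class n w) = word_value m {} w"
  unfolding psi_def
  by (metis Image_singleton_iff tw_class_def tw_class_self someI word_value_tw_rel)

lemma psi_closed: "psi m x \<in> carrier (free_Abelian_group {..<2 * m - 1})"
  using keys_word_value by (simp add: psi_def)

lemma psi_hom:
  "psi m \<in> hom ((twin_group n)\<lparr>carrier := derived (twin_group n) (carrier (twin_group n))\<rparr>)
              (free_Abelian_group {..<2 * m - 1})"
proof (rule homI)
  fix x y
  assume "x \<in> carrier ((twin_group n)\<lparr>carrier := derived (twin_group n) (carrier (twin_group n))\<rparr>)"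
    "y \<in> carrier ((twin_group n)\<lparr>carrier := derived (twin_group n) (carrier (twin_group n))\<rparr>)"
  then obtain u w where "u \<in> tw_words n" "even_word u" "x = tw_class n u"
    "w \<in> tw_words n" "even_word w" "y = tw_class n w"
    by (auto elim!: derived_twin_group_even_word)
  then show "psi m (x \<otimes>\<^bsub>(twin_group n)\<lparr>carrier := derived (twin_group n) (carrier (twin_group n))\<rparr>\<^esub> y)
    = psi m x \<otimes>\<^bsub>free_Abelian_group {..<2 * m - 1}\<^esub> psi m y"
    by (simp add: twin_group_mult psi_tw_class word_value_append parity_after_even_word)
qed (rule psi_closed)

section \<open>Word identities in the twin group\<close>

lemma tw_class_commute_xgen:
  assumes "a \<in> {1..<n}" "b \<in> {1..<n}" "l \<in> {1..<n}" "b = Suc a" "l + 2 \<le> a \<or> a + 3 \<le> l"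
  shows "tw_class n [l, a, b, a, b, l] = tw_class n [a, b, a, b]"
proof -
  have "tw_class n [l, a, b, a, b, l] = tw_class n [a, l, b, a, b, l]"
    by (rule tw_class_swap_at[where p = 0]) (use assms in auto)
  also have "\<dots> = tw_class n [a, b, l, a, b, l]"
    by (rule tw_class_swap_at[where p = 1]) (use assms in auto)
  also have "\<dots> = tw_class n [a, b, a, l, b, l]"
    by (rule tw_class_swap_at[where p = 2]) (use assms in auto)
  also have "\<dots> = tw_class n [a, b, a, b, l, l]"
    by (rule tw_class_swap_at[where p = 3]) (use assms in auto)
  also have "\<dots> = tw_class n [a, b, a, b]"
    by (rule tw_class_cancel_at[where p = 4]) (use assms in auto)
  finally show ?thesis .
qed

lemma tw_class_commutator_trivial:
  assumes i: "i \<in> {1..<n}" and j: "j \<in> {1..<n}" and ij: "i = j \<or> i + 1 < j \<or> j + 1 < i"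
  shows "tw_class n [i, j, i, j] = tw_class n []"
proof -
  have "tw_class n [i, j, i, j] = tw_class n [j, j]"
  proof (cases "i = j")
    case True
    show ?thesis unfolding True by (rule tw_class_cancel_at[where p = 0]) (use j in simp_all)
  next
    case False
    then have "tw_class n [i, j, i, j] = tw_class n [j, i, i, j]"
      by (intro tw_class_swap_at[where p = 0]) (use i j ij in auto)
    also have "\<dots> = tw_class n [j, j]"
      by (rule tw_class_cancel_at[where p = 1]) (use i j in simp_all)
    finally show ?thesis .
  qed
  also have "\<dots> = tw_class n []"
    by (rule tw_class_cancel_at[where p = 0]) (use j in simp_all)
  finally show ?thesis .
qed

text \<open>
  With \<open>b = a + 1\<close>, \<open>c = a + 2\<close> and \<open>x\<^sub>i = (\<tau>\<^sub>i\<tau>\<^sub>i\<^sub>+\<^sub>1)\<^sup>2\<close>, the left-hand side is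
  \<open>\<tau>\<^sub>c x\<^sub>a \<tau>\<^sub>c \<cdot> x\<^sub>a\<^sup>-\<^sup>1 \<cdot> \<tau>\<^sub>a x\<^sub>b \<tau>\<^sub>a x\<^sub>b\<^sup>-\<^sup>1\<close> and the right-hand side is the commutator of
  \<open>u = [\<tau>\<^sub>a\<tau>\<^sub>c, \<tau>\<^sub>b]\<close> (read as \<open>\<tau>\<^sub>a\<tau>\<^sub>c\<tau>\<^sub>b\<tau>\<^sub>a\<tau>\<^sub>c\<tau>\<^sub>b\<close>) with \<open>x\<^sub>b\<close>.\<close>

lemma tw_class_conj_xgen_two_up:
  assumes "a \<in> {1..<n}" "c \<in> {1..<n}" "b = Suc a" "c = Suc b"
  shows "tw_class n [c, a, b, a, b, c, b, a, b, a, a, b, c, b, c, a, c, b, c, b]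
       = tw_class n [a, c, b, a, c, b, b, c, b, c, b, c, a, b, c, a, c, b, c, b]"
proof -
  have "tw_class n [c, a, b, a, b, c, b, a, b, a, a, b, c, b, c, a, c, b, c, b]
      = tw_class n [c, a, b, a, b, c, b, a, b, b, c, b, c, a, c, b, c, b]"
    by (rule tw_class_cancel_at[where p = 9]) (use assms in simp_all)
  also have "\<dots> = tw_class n [c, a, b, a, b, c, b, a, c, b, c, a, c, b, c, b]"
    by (rule tw_class_cancel_at[where p = 8]) (use assms in simp_all)
  also have "\<dots> = tw_class n [c, a, b, a, b, c, b, a, c, b, c, c, a, b, c, b]"
    by (rule tw_class_swap_at[where p = 11]) (use assms in simp_all)
  also have "\<dots> = tw_class n [c, a, b, a, b, c, b, a, c, b, a, b, c, b]"
    by (rule tw_class_cancel_at[where p = 10]) (use assms in simp_all)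
  also have "\<dots> = tw_class n [a, c, b, a, b, c, b, a, c, b, a, b, c, b]"
    by (rule tw_class_swap_at[where p = 0]) (use assms in simp_all)
  also have "\<dots> = tw_class n [a, c, b, a, b, c, b, c, a, b, a, b, c, b]"
    by (rule tw_class_swap_at[where p = 7]) (use assms in simp_all)
  also have "\<dots> = tw_class n [a, c, b, a, b, c, b, c, a, b, c, c, a, b, c, b]"
    by (rule tw_class_cancel_at[where p = 10, symmetric]) (use assms in simp_all)
  also have "\<dots> = tw_class n [a, c, b, a, b, c, b, c, a, b, c, a, c, b, c, b]"
    by (rule tw_class_swap_at[where p = 11]) (use assms in simp_all)
  also have "\<dots> = tw_class n [a, c, b, a, c, c, b, c, b, c, a, b, c, a, c, b, c, b]"
    by (rule tw_class_cancel_at[where p = 4, symmetric]) (use assms in simp_all)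
  also have "\<dots> = tw_class n [a, c, b, a, c, b, b, c, b, c, b, c, a, b, c, a, c, b, c, b]"
    by (rule tw_class_cancel_at[where p = 5, symmetric]) (use assms in simp_all)
  finally show ?thesis .
qed

section \<open>Generators of \<open>TW\<^sub>n'\<close> modulo \<open>TW\<^sub>n''\<close>\<close>

locale twin =
  fixes m n :: nat
  assumes m_pos: "1 \<le> m" and n_eq: "n = m + 2"

sublocale twin \<subseteq> derived_quotient "twin_group n"
  by (rule derived_quotient.intro[OF group_twin_group])

context twin
begin

abbreviation "G \<equiv> twin_group n"
abbreviation "F \<equiv> free_Abelian_group {..<2 * m - 1}"
abbreviation "tau \<equiv> tw_gen n"

lemma less_n_iff: "l < n \<longleftrightarrow> l \<le> m + 1"
  using n_eq by auto

definition conj_tau :: "nat \<Rightarrow> nat list set \<Rightarrow> nat list set" where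
  "conj_tau l y = tau l \<otimes>\<^bsub>G\<^esub> y \<otimes>\<^bsub>G\<^esub> tau l"

lemma conj_tau_eq: "l \<in> {1..<n} \<Longrightarrow> conj_tau l y = tau l \<otimes>\<^bsub>G\<^esub> y \<otimes>\<^bsub>G\<^esub> inv\<^bsub>G\<^esub> (tau l)"
  by (simp add: conj_tau_def tw_gen_inv)

lemma conj_tau_tw_class:
  "l \<in> {1..<n} \<Longrightarrow> w \<in> tw_words n \<Longrightarrow> conj_tau l (tw_class n w) = tw_class n (l # w @ [l])"
  by (simp add: conj_tau_def tw_gen_def twin_group_mult)

lemma conj_tau_in_K: "l \<in> {1..<n} \<Longrightarrow> y \<in> K \<Longrightarrow> conj_tau l y \<in> K"
  by (simp add: conj_tau_eq conj_in_K tw_gen_carrier)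

lemma conj_tau_mult:
  assumes "l \<in> {1..<n}" "x \<in> carrier G" "y \<in> carrier G"
  shows "conj_tau l (x \<otimes>\<^bsub>G\<^esub> y) = conj_tau l x \<otimes>\<^bsub>G\<^esub> conj_tau l y"
  using assms tw_gen_carrier[OF assms(1)]
  by (simp add: conj_tau_eq m_assoc inv_mult_cancel_left)

lemma conj_tau_inv:
  assumes "l \<in> {1..<n}" "x \<in> carrier G"
  shows "conj_tau l (inv\<^bsub>G\<^esub> x) = inv\<^bsub>G\<^esub> (conj_tau l x)"
  using assms tw_gen_carrier[OF assms(1)] by (simp add: conj_tau_eq inv_mult_group m_assoc)

lemma tau_tau: "l \<in> {1..<n} \<Longrightarrow> tau l \<otimes>\<^bsub>G\<^esub> tau l = \<one>\<^bsub>G\<^esub>"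
  using tw_class_cancel[of "[]" n "[]" l] by (simp add: tw_gen_def twin_group_mult twin_group_one)

lemma conj_tau_conj_tau:
  assumes "l \<in> {1..<n}" "x \<in> carrier G"
  shows "conj_tau l (conj_tau l x) = x"
  using assms tw_gen_carrier[OF assms(1)]
  by (simp add: conj_tau_def m_assoc tau_tau flip: m_assoc[of "tau l" "tau l"])

lemma q_conj_tau_cong:
  "l \<in> {1..<n} \<Longrightarrow> x \<in> K \<Longrightarrow> y \<in> K \<Longrightarrow> q x = q y \<Longrightarrow> q (conj_tau l x) = q (conj_tau l y)"
  unfolding conj_tau_eq by (rule q_conj_cong[OF tw_gen_carrier])

lemma q_conj_tau_commute:
  "l \<in> {1..<n} \<Longrightarrow> l' \<in> {1..<n} \<Longrightarrow> x \<in> K \<Longrightarrow>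
    q (conj_tau l (conj_tau l' x)) = q (conj_tau l' (conj_tau l x))"
  unfolding conj_tau_eq by (rule q_conj_commute[OF _ tw_gen_carrier tw_gen_carrier])

definition xgen :: "nat \<Rightarrow> nat list set" where
  "xgen i = tw_class n [i, Suc i, i, Suc i]"

definition ygen :: "nat \<Rightarrow> nat list set" where
  "ygen k = conj_tau k (xgen (Suc k)) \<otimes>\<^bsub>G\<^esub> inv\<^bsub>G\<^esub> (xgen (Suc k))"

lemma xgen_in_K: "i \<in> {1..m} \<Longrightarrow> xgen i \<in> K"
  using commutator_in_K[of "tau i" "tau (Suc i)"]
  by (simp add: less_n_iff tw_gen_def xgen_def twin_group_mult twin_group_inv)

lemma ygen_in_K: "k \<in> {1..<m} \<Longrightarrow> ygen k \<in> K"
  unfolding ygen_def by (intro K_mult K_inv conj_tau_in_K xgen_in_K) (auto simp: less_n_iff)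

lemma ygen_tw_class:
  "k \<in> {1..<m} \<Longrightarrow>
    ygen k = tw_class n [k, Suc k, Suc (Suc k), Suc k, Suc (Suc k), k, Suc (Suc k), Suc k, Suc (Suc k), Suc k]"
  by (simp add: less_n_iff ygen_def xgen_def conj_tau_tw_class twin_group_mult twin_group_inv)

lemma psi_xgen: "i \<in> {1..m} \<Longrightarrow> psi m (xgen i) = frag_of (i - 1)"
  unfolding xgen_def by (auto simp: less_n_iff psi_tw_class toggle_def letter_value_def)

lemma psi_ygen: "k \<in> {1..<m} \<Longrightarrow> psi m (ygen k) = frag_of (m + k - 1)"
  unfolding ygen_tw_class by (auto simp: less_n_iff psi_tw_class toggle_def letter_value_def)

lemma conj_tau_xgen_far:
  assumes "l \<in> {1..<n}" "i \<in> {1..m}" "l + 2 \<le> i \<or> i + 3 \<le> l"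
  shows "conj_tau l (xgen i) = xgen i"
  using assms unfolding xgen_def
  by (simp add: less_n_iff conj_tau_tw_class tw_class_commute_xgen)

lemma conj_tau_xgen_self:
  assumes "i \<in> {1..m}" "l = i \<or> l = Suc i"
  shows "conj_tau l (xgen i) = inv\<^bsub>G\<^esub> (xgen i)"
proof -
  have "tw_class n [i, i, Suc i, i, Suc i, i] = tw_class n [Suc i, i, Suc i, i]"
    by (rule tw_class_cancel_at[where p = 0]) (use assms in \<open>simp_all add: less_n_iff\<close>)
  moreover have "tw_class n [Suc i, i, Suc i, i, Suc i, Suc i] = tw_class n [Suc i, i, Suc i, i]"
    by (rule tw_class_cancel_at[where p = 4]) (use assms in \<open>simp_all add: less_n_iff\<close>)
  ultimately show ?thesis
    using assms unfolding xgen_def by (auto simp: less_n_iff conj_tau_tw_class twin_group_inv)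
qed

lemma conj_tau_xgen_two_up:
  assumes "i \<in> {1..<m}"
  shows "conj_tau (Suc (Suc i)) (xgen i) \<otimes>\<^bsub>G\<^esub> inv\<^bsub>G\<^esub> (xgen i) \<otimes>\<^bsub>G\<^esub> ygen i \<in> K2"
proof -
  have idx: "i \<in> {1..<n}" "Suc i \<in> {1..<n}" "Suc (Suc i) \<in> {1..<n}"
    using assms by (auto simp: less_n_iff)
  define u where "u = tw_class n [i, Suc (Suc i), Suc i, i, Suc (Suc i), Suc i]"
  have "tw_class n [i, Suc (Suc i), Suc i, Suc (Suc i), i, Suc i] = u"
    unfolding u_def by (rule tw_class_swap_at[where p = 3]) (use idx in simp_all)
  then have "u = tw_class n [i, Suc (Suc i)] \<otimes>\<^bsub>G\<^esub> tau (Suc i)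
      \<otimes>\<^bsub>G\<^esub> inv\<^bsub>G\<^esub> (tw_class n [i, Suc (Suc i)]) \<otimes>\<^bsub>G\<^esub> inv\<^bsub>G\<^esub> (tau (Suc i))"
    using idx by (simp add: tw_gen_def twin_group_mult twin_group_inv)
  then have "u \<in> K" using idx by (simp add: commutator_in_K tw_gen_carrier)
  have "conj_tau (Suc (Suc i)) (xgen i) \<otimes>\<^bsub>G\<^esub> inv\<^bsub>G\<^esub> (xgen i) \<otimes>\<^bsub>G\<^esub> ygen i
    = tw_class n [Suc (Suc i), i, Suc i, i, Suc i, Suc (Suc i), Suc i, i, Suc i, i,
                  i, Suc i, Suc (Suc i), Suc i, Suc (Suc i), i, Suc (Suc i), Suc i, Suc (Suc i), Suc i]"
    using assms idx by (simp add: ygen_tw_class xgen_def conj_tau_tw_class twin_group_inv twin_group_mult)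
  also have "\<dots> = tw_class n [i, Suc (Suc i), Suc i, i, Suc (Suc i), Suc i, Suc i, Suc (Suc i), Suc i, Suc (Suc i),
                  Suc i, Suc (Suc i), i, Suc i, Suc (Suc i), i, Suc (Suc i), Suc i, Suc (Suc i), Suc i]"
    by (rule tw_class_conj_xgen_two_up) (use idx in simp_all)
  also have "\<dots> = u \<otimes>\<^bsub>G\<^esub> xgen (Suc i) \<otimes>\<^bsub>G\<^esub> inv\<^bsub>G\<^esub> u \<otimes>\<^bsub>G\<^esub> inv\<^bsub>G\<^esub> (xgen (Suc i))"
    using idx by (simp add: u_def xgen_def twin_group_mult twin_group_inv)
  finally show ?thesis
    using commutator_in_K2[OF \<open>u \<in> K\<close> xgen_in_K[of "Suc i"]] assms by simp
qed

lemma q_conj_tau_xgen_two_up: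
  assumes "i \<in> {1..<m}"
  shows "q (conj_tau (Suc (Suc i)) (xgen i)) = q (inv\<^bsub>G\<^esub> (ygen i) \<otimes>\<^bsub>G\<^esub> xgen i)"
proof -
  have x: "xgen i \<in> K" and y: "ygen i \<in> K" and cx: "conj_tau (Suc (Suc i)) (xgen i) \<in> K"
    using assms by (auto simp: less_n_iff intro!: xgen_in_K ygen_in_K conj_tau_in_K)
  have "conj_tau (Suc (Suc i)) (xgen i) \<otimes>\<^bsub>G\<^esub> inv\<^bsub>G\<^esub> (inv\<^bsub>G\<^esub> (ygen i) \<otimes>\<^bsub>G\<^esub> xgen i)
    = conj_tau (Suc (Suc i)) (xgen i) \<otimes>\<^bsub>G\<^esub> inv\<^bsub>G\<^esub> (xgen i) \<otimes>\<^bsub>G\<^esub> ygen i"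
    using K_carrier[OF x] K_carrier[OF y] K_carrier[OF cx] by (simp add: inv_mult_group m_assoc)
  then show ?thesis
    using conj_tau_xgen_two_up[OF assms] q_eq_iff[OF cx K_mult[OF K_inv[OF y] x]] by simp
qed

definition gen :: "nat \<Rightarrow> nat list set" where
  "gen k = (if k < m then xgen (Suc k) else ygen (k + 1 - m))"

abbreviation "GS \<equiv> generate G (gen ` {..<2 * m - 1})"

lemma xgen_in_GS: "i \<in> {1..m} \<Longrightarrow> xgen i \<in> GS"
  by (intro generate.incl image_eqI[of _ _ "i - 1"]) (auto simp: gen_def)

lemma ygen_in_GS: "k \<in> {1..<m} \<Longrightarrow> ygen k \<in> GS"
  by (intro generate.incl image_eqI[of _ _ "m + k - 1"]) (auto simp: gen_def)

lemma gen_in_K: "k < 2 * m - 1 \<Longrightarrow> gen k \<in> K"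
  by (cases "k < m") (auto simp: gen_def intro!: xgen_in_K ygen_in_K)

lemma GS_subset_K: "GS \<subseteq> K"
  by (rule generate_subgroup_incl[OF _ K_subgroup]) (use gen_in_K in auto)

lemma inv_in_GS: "z \<in> GS \<Longrightarrow> inv\<^bsub>G\<^esub> z \<in> GS"
  by (rule generate_m_inv_closed) (use gen_in_K K_carrier in auto)

lemma psi_gen:
  assumes "k < 2 * m - 1"
  shows "psi m (gen k) = frag_of k"
proof (cases "k < m")
  case True
  then show ?thesis using psi_xgen[of "Suc k"] by (simp add: gen_def)
next
  case False
  then have "k + 1 - m \<in> {1..<m}" using assms by auto
  then show ?thesis using False psi_ygen[of "k + 1 - m"] by (simp add: gen_def)
qed

lemma q_conj_tau_xgen:
  assumes l: "l \<in> {1..<n}" and i: "i \<in> {1..m}"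
  shows "\<exists>z\<in>GS. q (conj_tau l (xgen i)) = q z"
proof -
  have x: "xgen i \<in> K" by (rule xgen_in_K[OF i])
  consider "l + 2 \<le> i \<or> i + 3 \<le> l" | "l = i \<or> l = Suc i" | "Suc l = i" | "l = Suc (Suc i)"
    by arith
  then show ?thesis
  proof cases
    case 1
    then show ?thesis using conj_tau_xgen_far[OF l i] xgen_in_GS[OF i] by auto
  next
    case 2
    then show ?thesis using conj_tau_xgen_self[OF i] inv_in_GS[OF xgen_in_GS[OF i]] by auto
  next
    case 3
    then have "l \<in> {1..<m}" using l i by auto
    then have "conj_tau l (xgen i) = ygen l \<otimes>\<^bsub>G\<^esub> xgen i"
      using K_carrier[OF x] K_carrier[OF conj_tau_in_K[OF assms(1) x]] 3
      by (simp add: ygen_def m_assoc)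
    then show ?thesis
      using generate.eng[OF ygen_in_GS[OF \<open>l \<in> {1..<m}\<close>] xgen_in_GS[OF i]] by auto
  next
    case 4
    then have "i \<in> {1..<m}" using l i by (auto simp: less_n_iff)
    then show ?thesis
      using 4 q_conj_tau_xgen_two_up generate.eng[OF inv_in_GS[OF ygen_in_GS] xgen_in_GS[OF i]]
      by blast
  qed
qed

lemma q_conj_tau_ygen_split:
  assumes "l \<in> {1..<n}" "k \<in> {1..<m}"
  shows "q (conj_tau l (ygen k))
    = q (conj_tau l (conj_tau k (xgen (Suc k)))) \<otimes>\<^bsub>M\<^esub> inv\<^bsub>M\<^esub> (q (conj_tau l (xgen (Suc k))))"
proof -
  have k: "k \<in> {1..<n}" and x: "xgen (Suc k) \<in> K" using assms by (auto simp: less_n_iff xgen_in_K)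
  have cx: "conj_tau k (xgen (Suc k)) \<in> K" by (rule conj_tau_in_K[OF k x])
  have "conj_tau l (ygen k) = conj_tau l (conj_tau k (xgen (Suc k))) \<otimes>\<^bsub>G\<^esub> inv\<^bsub>G\<^esub> (conj_tau l (xgen (Suc k)))"
    unfolding ygen_def using assms(1) K_carrier[OF x] K_carrier[OF cx]
    by (simp add: conj_tau_mult conj_tau_inv)
  then show ?thesis
    using q_mult_inv conj_tau_in_K[OF assms(1)] x cx by simp
qed

lemma q_conj_tau_ygen_far:
  assumes l: "l \<in> {1..<n}" and k: "k \<in> {1..<m}" and far: "l + 1 \<le> k \<or> k + 4 \<le> l"
  shows "q (conj_tau l (ygen k)) = q (ygen k)"
proof -
  have kn: "k \<in> {1..<n}" and x: "xgen (Suc k) \<in> K" using k by (auto simp: less_n_iff xgen_in_K)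
  have cx: "conj_tau l (xgen (Suc k)) = xgen (Suc k)"
    by (rule conj_tau_xgen_far) (use l k far in auto)
  have "q (conj_tau l (conj_tau k (xgen (Suc k)))) = q (conj_tau k (xgen (Suc k)))"
    using q_conj_tau_commute[OF l kn x] unfolding cx .
  then show ?thesis
    using q_conj_tau_ygen_split[OF l k] q_mult_inv[OF conj_tau_in_K[OF kn x] x]
    unfolding cx ygen_def by simp
qed

lemma conj_tau_ygen_self:
  assumes k: "k \<in> {1..<m}"
  shows "conj_tau k (ygen k) = inv\<^bsub>G\<^esub> (ygen k)"
proof -
  define x where "x = xgen (Suc k)"
  have kn: "k \<in> {1..<n}" and xK: "x \<in> K" and xG: "x \<in> carrier G"
    using k by (auto simp: less_n_iff x_def xgen_in_K K_carrier)
  have cxG: "conj_tau k x \<in> carrier G" by (rule K_carrier[OF conj_tau_in_K[OF kn xK]])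
  have "conj_tau k (ygen k) = conj_tau k (conj_tau k x) \<otimes>\<^bsub>G\<^esub> conj_tau k (inv\<^bsub>G\<^esub> x)"
    unfolding ygen_def x_def[symmetric] by (rule conj_tau_mult[OF kn cxG inv_closed[OF xG]])
  also have "\<dots> = x \<otimes>\<^bsub>G\<^esub> inv\<^bsub>G\<^esub> (conj_tau k x)"
    by (simp only: conj_tau_conj_tau[OF kn xG] conj_tau_inv[OF kn xG])
  also have "\<dots> = inv\<^bsub>G\<^esub> (ygen k)"
    unfolding ygen_def x_def[symmetric] using xG cxG by (simp add: inv_mult_group)
  finally show ?thesis .
qed

lemma q_conj_tau_ygen_adjacent:
  assumes l: "l \<in> {1..<n}" and k: "k \<in> {1..<m}" and adj: "l = Suc k \<or> l = Suc (Suc k)"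
  shows "q (conj_tau l (ygen k)) = q (inv\<^bsub>G\<^esub> (ygen k))"
proof -
  interpret M: comm_group M by (rule comm_group_M)
  define x where "x = xgen (Suc k)"
  have kn: "k \<in> {1..<n}" and xK: "x \<in> K" and xG: "x \<in> carrier G"
    using k by (auto simp: less_n_iff x_def xgen_in_K K_carrier)
  have cxK: "conj_tau k x \<in> K" by (rule conj_tau_in_K[OF kn xK])
  have lx: "conj_tau l x = inv\<^bsub>G\<^esub> x"
    unfolding x_def using k adj by (intro conj_tau_xgen_self) auto
  have "q (conj_tau l (conj_tau k x)) = q (conj_tau k (inv\<^bsub>G\<^esub> x))"
    using q_conj_tau_commute[OF l kn xK] unfolding lx .
  then have "q (conj_tau l (ygen k)) = inv\<^bsub>M\<^esub> (q (conj_tau k x)) \<otimes>\<^bsub>M\<^esub> inv\<^bsub>M\<^esub> (inv\<^bsub>M\<^esub> (q x))"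
    using q_conj_tau_ygen_split[OF l k]
    unfolding x_def[symmetric] lx conj_tau_inv[OF kn xG] q_inv[OF cxK] q_inv[OF xK] by simp
  also have "\<dots> = inv\<^bsub>M\<^esub> (q (conj_tau k x) \<otimes>\<^bsub>M\<^esub> inv\<^bsub>M\<^esub> (q x))"
    by (rule M.inv_mult[symmetric]) (use q_closed[OF xK] q_closed[OF cxK] in simp_all)
  also have "\<dots> = inv\<^bsub>M\<^esub> (q (ygen k))"
    unfolding ygen_def x_def[symmetric] q_mult_inv[OF cxK xK] ..
  also have "\<dots> = q (inv\<^bsub>G\<^esub> (ygen k))"
    by (rule q_inv[OF ygen_in_K[OF k], symmetric])
  finally show ?thesis .
qed

lemma q_conj_tau_ygen_three_up:
  assumes l: "l = k + 3" "l \<in> {1..<n}" and k: "k \<in> {1..<m}"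
  shows "q (conj_tau l (ygen k)) = q (ygen k)"
proof -
  interpret M: comm_group M by (rule comm_group_M)
  define x where "x = xgen (Suc k)"
  define y' where "y' = ygen (Suc k)"
  have kn: "k \<in> {1..<n}" and xK: "x \<in> K" and xG: "x \<in> carrier G"
    using k by (auto simp: less_n_iff x_def xgen_in_K K_carrier)
  have cxK: "conj_tau k x \<in> K" by (rule conj_tau_in_K[OF kn xK])
  have k1: "Suc k \<in> {1..<m}" using l k by (auto simp: less_n_iff)
  have y'K: "y' \<in> K" and y'G: "y' \<in> carrier G"
    unfolding y'_def using ygen_in_K[OF k1] K_carrier by auto
  have ky': "q (conj_tau k y') = q y'"
    unfolding y'_def by (rule q_conj_tau_ygen_far[OF kn k1]) simp
  have lx: "q (conj_tau l x) = q (inv\<^bsub>G\<^esub> y' \<otimes>\<^bsub>G\<^esub> x)"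
    unfolding x_def y'_def l(1) using q_conj_tau_xgen_two_up[OF k1] by (simp add: numeral_3_eq_3)
  also have "\<dots> = inv\<^bsub>M\<^esub> (q y') \<otimes>\<^bsub>M\<^esub> q x"
    by (simp only: q_mult[OF K_inv[OF y'K] xK] q_inv[OF y'K])
  finally have q_lx: "q (conj_tau l x) = inv\<^bsub>M\<^esub> (q y') \<otimes>\<^bsub>M\<^esub> q x" .
  have "q (conj_tau l (conj_tau k x)) = q (conj_tau k (inv\<^bsub>G\<^esub> y' \<otimes>\<^bsub>G\<^esub> x))"
    using q_conj_tau_commute[OF l(2) kn xK]
      q_conj_tau_cong[OF kn conj_tau_in_K[OF l(2) xK] K_mult[OF K_inv[OF y'K] xK] lx] by simp
  also have "\<dots> = q (inv\<^bsub>G\<^esub> (conj_tau k y') \<otimes>\<^bsub>G\<^esub> conj_tau k x)"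
    by (simp only: conj_tau_mult[OF kn inv_closed[OF y'G] xG] conj_tau_inv[OF kn y'G])
  also have "\<dots> = inv\<^bsub>M\<^esub> (q y') \<otimes>\<^bsub>M\<^esub> q (conj_tau k x)"
    by (simp only: q_mult[OF K_inv[OF conj_tau_in_K[OF kn y'K]] cxK] q_inv[OF conj_tau_in_K[OF kn y'K]] ky')
  finally have q_lkx: "q (conj_tau l (conj_tau k x)) = inv\<^bsub>M\<^esub> (q y') \<otimes>\<^bsub>M\<^esub> q (conj_tau k x)" .
  have "q (conj_tau l (ygen k))
    = inv\<^bsub>M\<^esub> (q y') \<otimes>\<^bsub>M\<^esub> q (conj_tau k x) \<otimes>\<^bsub>M\<^esub> inv\<^bsub>M\<^esub> (inv\<^bsub>M\<^esub> (q y') \<otimes>\<^bsub>M\<^esub> q x)"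
    using q_conj_tau_ygen_split[OF l(2) k] unfolding x_def[symmetric] q_lx q_lkx .
  also have "\<dots> = q (conj_tau k x) \<otimes>\<^bsub>M\<^esub> inv\<^bsub>M\<^esub> (q x)"
    using q_closed[OF xK] q_closed[OF cxK] q_closed[OF y'K]
    by (intro M.mult_inv_cancel_common_left) auto
  also have "\<dots> = q (ygen k)"
    unfolding ygen_def x_def[symmetric] by (rule q_mult_inv[OF cxK xK, symmetric])
  finally show ?thesis .
qed

lemma q_conj_tau_ygen:
  assumes l: "l \<in> {1..<n}" and k: "k \<in> {1..<m}"
  shows "\<exists>z\<in>GS. q (conj_tau l (ygen k)) = q z"
proof -
  have y: "ygen k \<in> GS" "inv\<^bsub>G\<^esub> (ygen k) \<in> GS"
    using ygen_in_GS[OF k] inv_in_GS[OF ygen_in_GS[OF k]] by auto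
  consider "l + 1 \<le> k \<or> k + 4 \<le> l" | "l = k" | "l = Suc k \<or> l = Suc (Suc k)" | "l = k + 3"
    by arith
  then show ?thesis
  proof cases
    case 1
    then show ?thesis using q_conj_tau_ygen_far[OF l k] y(1) by blast
  next
    case 2
    then show ?thesis using conj_tau_ygen_self[OF k] y(2) by auto
  next
    case 3
    then show ?thesis using q_conj_tau_ygen_adjacent[OF l k] y(2) by blast
  next
    case 4
    then show ?thesis using q_conj_tau_ygen_three_up[OF 4 l k] y(1) by blast
  qed
qed

end

section \<open>The abelianisation of \<open>TW\<^sub>n'\<close>\<close>

context twin
begin

definition span :: "nat list set set" where
  "span = {y \<in> K. \<exists>z\<in>GS. q y = q z}"

lemma span_subgroup: "subgroup span G"
proof (rule subgroupI)
  show "span \<subseteq> carrier G" using K_carrier by (auto simp: span_def)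
  have "\<one>\<^bsub>G\<^esub> \<in> span" using K_one generate.one by (auto simp: span_def)
  then show "span \<noteq> {}" by blast
next
  fix a assume "a \<in> span"
  then obtain z where a: "a \<in> K" and z: "z \<in> GS" "q a = q z" by (auto simp: span_def)
  then have "q (inv\<^bsub>G\<^esub> a) = q (inv\<^bsub>G\<^esub> z)"
    using GS_subset_K by (simp only: q_inv[OF a] q_inv subsetD)
  then show "inv\<^bsub>G\<^esub> a \<in> span"
    using K_inv[OF a] inv_in_GS[OF z(1)] by (auto simp: span_def)
next
  fix a b assume "a \<in> span" "b \<in> span"
  then obtain z z' where a: "a \<in> K" "z \<in> GS" "q a = q z" and b: "b \<in> K" "z' \<in> GS" "q b = q z'"
    by (auto simp: span_def)
  have "z \<in> K" "z' \<in> K" using a b GS_subset_K by auto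
  then have "q (a \<otimes>\<^bsub>G\<^esub> b) = q (z \<otimes>\<^bsub>G\<^esub> z')"
    by (simp only: q_mult a(1,3) b(1,3))
  then show "a \<otimes>\<^bsub>G\<^esub> b \<in> span"
    using K_mult[OF a(1) b(1)] generate.eng[OF a(2) b(2)] by (auto simp: span_def)
qed

lemma GS_subset_span: "GS \<subseteq> span"
  using GS_subset_K by (auto simp: span_def)

lemma conj_tau_gen_in_span:
  assumes l: "l \<in> {1..<n}" and k: "k < 2 * m - 1"
  shows "conj_tau l (gen k) \<in> span"
proof -
  have "\<exists>z\<in>GS. q (conj_tau l (gen k)) = q z"
  proof (cases "k < m")
    case True
    then show ?thesis using q_conj_tau_xgen[OF l, of "Suc k"] by (simp add: gen_def)
  next
    case False
    then have "gen k = ygen (k + 1 - m)" "k + 1 - m \<in> {1..<m}" using k by (auto simp: gen_def)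
    then show ?thesis using q_conj_tau_ygen[OF l] by simp
  qed
  then show ?thesis using conj_tau_in_K[OF l gen_in_K[OF k]] by (simp add: span_def)
qed

lemma conj_tau_GS_in_span:
  assumes l: "l \<in> {1..<n}" and z: "z \<in> GS"
  shows "conj_tau l z \<in> span"
  using z
proof (induction rule: generate.induct)
  case one
  have "conj_tau l \<one>\<^bsub>G\<^esub> = \<one>\<^bsub>G\<^esub>" using l tau_tau by (simp add: conj_tau_def tw_gen_carrier)
  then show ?case using subgroup.one_closed[OF span_subgroup] by simp
next
  case (incl h)
  then show ?case using conj_tau_gen_in_span[OF l] by blast
next
  case (inv h)
  then obtain k where k: "k < 2 * m - 1" "h = gen k" by blast
  then show ?case
    using conj_tau_inv[OF l K_carrier[OF gen_in_K[OF k(1)]]]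
      subgroup.m_inv_closed[OF span_subgroup conj_tau_gen_in_span[OF l k(1)]] by simp
next
  case (eng h h')
  then have "h \<in> carrier G" "h' \<in> carrier G" using GS_subset_K K_carrier by auto
  then show ?case
    using conj_tau_mult[OF l] subgroup.m_closed[OF span_subgroup eng.IH] by simp
qed

lemma conj_tau_span:
  assumes l: "l \<in> {1..<n}" and y: "y \<in> span"
  shows "conj_tau l y \<in> span"
proof -
  obtain z where yz: "y \<in> K" "z \<in> GS" "q y = q z" using y by (auto simp: span_def)
  then have "z \<in> K" using GS_subset_K by auto
  obtain z' where z': "z' \<in> GS" "q (conj_tau l z) = q z'"
    using conj_tau_GS_in_span[OF l yz(2)] by (auto simp: span_def)
  have "q (conj_tau l y) = q z'"
    using q_conj_tau_cong[OF l yz(1) \<open>z \<in> K\<close> yz(3)] z'(2) by simp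
  then show ?thesis using conj_tau_in_K[OF l yz(1)] z'(1) by (auto simp: span_def)
qed

lemma tau_commutator_in_span:
  assumes i: "i \<in> {1..<n}" and j: "j \<in> {1..<n}"
  shows "tau i \<otimes>\<^bsub>G\<^esub> tau j \<otimes>\<^bsub>G\<^esub> inv\<^bsub>G\<^esub> (tau i) \<otimes>\<^bsub>G\<^esub> inv\<^bsub>G\<^esub> (tau j) \<in> span"
proof -
  have e: "tau i \<otimes>\<^bsub>G\<^esub> tau j \<otimes>\<^bsub>G\<^esub> inv\<^bsub>G\<^esub> (tau i) \<otimes>\<^bsub>G\<^esub> inv\<^bsub>G\<^esub> (tau j) = tw_class n [i, j, i, j]"
    using i j by (simp add: tw_gen_def twin_group_mult twin_group_inv)
  have one: "tw_class n [] \<in> span"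
    using subgroup.one_closed[OF span_subgroup] by (simp add: twin_group_one)
  consider "i = j \<or> i + 1 < j \<or> j + 1 < i" | "j = Suc i" | "i = Suc j" by arith
  then show ?thesis
  proof cases
    case 1
    then show ?thesis using e one tw_class_commutator_trivial[OF i j] by simp
  next
    case 2
    then have "i \<in> {1..m}" using i j by (auto simp: less_n_iff)
    then show ?thesis
      using e 2 GS_subset_span xgen_in_GS by (auto simp: xgen_def)
  next
    case 3
    then have "j \<in> {1..m}" using i j by (auto simp: less_n_iff)
    then have "inv\<^bsub>G\<^esub> (xgen j) \<in> span"
      using GS_subset_span inv_in_GS xgen_in_GS by blast
    then show ?thesis
      using e 3 i j by (simp add: xgen_def twin_group_inv)
  qed
qed

lemma K_subset_span: "K \<subseteq> span"
proof (rule derived_subset_normal_closure[OF span_subgroup _ generate_tw_gen])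
  show "tau ` {1..<n} \<subseteq> carrier G" by (auto simp: tw_gen_carrier)
next
  fix s y assume "s \<in> tau ` {1..<n}" "y \<in> span"
  then show "s \<otimes>\<^bsub>G\<^esub> y \<otimes>\<^bsub>G\<^esub> inv\<^bsub>G\<^esub> s \<in> span"
    using conj_tau_span by (auto simp: conj_tau_eq)
next
  fix s y assume "s \<in> tau ` {1..<n}" "y \<in> span"
  then show "inv\<^bsub>G\<^esub> s \<otimes>\<^bsub>G\<^esub> y \<otimes>\<^bsub>G\<^esub> s \<in> span"
    using conj_tau_span by (auto simp: conj_tau_def tw_gen_inv)
next
  fix s t assume "s \<in> tau ` {1..<n}" "t \<in> tau ` {1..<n}"
  then show "s \<otimes>\<^bsub>G\<^esub> t \<otimes>\<^bsub>G\<^esub> inv\<^bsub>G\<^esub> s \<otimes>\<^bsub>G\<^esub> inv\<^bsub>G\<^esub> t \<in> span"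
    using tau_commutator_in_span by blast
qed

lemma psi_group_hom: "group_hom H F (psi m)"
  using psi_hom group_H by (simp add: group_hom_def group_hom_axioms_def)

lemma psi_mult: "x \<in> K \<Longrightarrow> y \<in> K \<Longrightarrow> psi m (x \<otimes>\<^bsub>G\<^esub> y) = psi m x + psi m y"
  using group_hom.hom_mult[OF psi_group_hom] by simp

lemma psi_inv: "x \<in> K \<Longrightarrow> psi m (inv\<^bsub>G\<^esub> x) = - psi m x"
  using group_hom.hom_inv[OF psi_group_hom] psi_closed by (simp add: inv_H)

lemma psi_one: "psi m \<one>\<^bsub>G\<^esub> = 0"
  using group_hom.hom_one[OF psi_group_hom] by simp

lemma psi_K2: "x \<in> K2 \<Longrightarrow> psi m x = 0"
  using group_hom.derived_subset_kernel[OF psi_group_hom abelian_free_Abelian_group]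
    derived_consistent[OF subset_refl K_subgroup]
  by (auto simp: kernel_def)

lemma q_eq_hom_psi:
  assumes \<phi>: "\<phi> \<in> hom F M" "\<And>k. k < 2 * m - 1 \<Longrightarrow> \<phi> (frag_of k) = q (gen k)"
    and z: "z \<in> GS"
  shows "q z = \<phi> (psi m z)"
proof -
  interpret \<phi>: group_hom F M \<phi>
    using \<phi>(1) comm_group_M by (simp add: group_hom_def group_hom_axioms_def comm_group.axioms(2))
  show ?thesis
    using z
  proof (induction rule: generate.induct)
    case one
    then show ?case using \<phi>.hom_one by (simp add: q_one psi_one)
  next
    case (incl h)
    then show ?case using \<phi>(2) psi_gen by auto
  next
    case (inv h)
    then obtain k where "k < 2 * m - 1" "h = gen k" by blast
    then show ?case
      using \<phi>(2) psi_gen \<phi>.hom_inv[of "frag_of k"] by (simp add: q_inv psi_inv gen_in_K)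
  next
    case (eng h h')
    then have "h \<in> K" "h' \<in> K" using GS_subset_K by auto
    then show ?case
      using eng.IH \<phi>.hom_mult[OF psi_closed psi_closed] by (simp add: q_mult psi_mult)
  qed
qed

text \<open>
  The universal property gives \<open>\<phi> : \<int>\<^sup>2\<^sup>m\<^sup>-\<^sup>1 \<rightarrow> TW\<^sub>n'/TW\<^sub>n''\<close> sending basis vectors to generators;
  \<open>\<phi> \<circ> \<psi>\<close> and \<open>q\<close> agree on the span of the generators, which is all of \<open>TW\<^sub>n'\<close> modulo \<open>TW\<^sub>n''\<close>.\<close>

lemma kernel_psi_subset_K2:
  assumes x: "x \<in> K" "psi m x = 0"
  shows "x \<in> K2"
proof -
  interpret M: comm_group M by (rule comm_group_M)
  obtain \<phi> where \<phi>: "\<phi> \<in> hom F M" "\<And>k. k \<in> {..<2 * m - 1} \<Longrightarrow> \<phi> (frag_of k) = q (gen k)"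
    using M.free_Abelian_group_universal[of "\<lambda>k. q (gen k)" "{..<2 * m - 1}"] gen_in_K q_closed
    by blast
  interpret \<phi>: group_hom F M \<phi>
    using \<phi>(1) by (simp add: group_hom_def group_hom_axioms_def M.is_group)
  obtain z where z: "z \<in> GS" "q x = q z" using K_subset_span x(1) by (auto simp: span_def)
  have "z \<in> K" using z(1) GS_subset_K by auto
  then have "x \<otimes>\<^bsub>G\<^esub> inv\<^bsub>G\<^esub> z \<in> K2" using q_eq_iff[OF x(1) \<open>z \<in> K\<close>] z(2) by simp
  then have "psi m (x \<otimes>\<^bsub>G\<^esub> inv\<^bsub>G\<^esub> z) = 0" by (rule psi_K2)
  then have "psi m z = psi m x" using \<open>z \<in> K\<close> x(1) by (simp add: psi_mult psi_inv K_inv)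
  then have "q x = q \<one>\<^bsub>G\<^esub>"
    using z q_eq_hom_psi[OF \<phi>] x(2) \<phi>.hom_one by (simp add: q_one)
  then show ?thesis
    using q_eq_iff[OF x(1) K_one] K_carrier[OF x(1)] by simp
qed

lemma kernel_psi: "kernel H F (psi m) = K2"
  using kernel_psi_subset_K2 psi_K2 K2_subset_K by (auto simp: kernel_def)

lemma psi_surj: "psi m ` K = carrier F"
proof
  show "psi m ` K \<subseteq> carrier F" using psi_closed by blast
  show "carrier F \<subseteq> psi m ` K"
  proof
    fix c assume "c \<in> carrier F"
    then have "Poly_Mapping.keys c \<subseteq> {..<2 * m - 1}" by simp
    then show "c \<in> psi m ` K"
    proof (rule free_Abelian_group_induct[where P = "\<lambda>c. c \<in> psi m ` K"])
      show "0 \<in> psi m ` K" using psi_one K_one by force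
    next
      fix a b assume "a \<in> psi m ` K" "b \<in> psi m ` K"
      then obtain x y where "x \<in> K" "y \<in> K" "a = psi m x" "b = psi m y" by blast
      then show "a - b \<in> psi m ` K"
        using K_mult[OF \<open>x \<in> K\<close> K_inv[OF \<open>y \<in> K\<close>]]
        by (auto simp: psi_mult psi_inv K_inv intro!: image_eqI[of _ _ "x \<otimes>\<^bsub>G\<^esub> inv\<^bsub>G\<^esub> y"])
    next
      fix k assume "k \<in> {..<2 * m - 1}"
      then show "frag_of k \<in> psi m ` K" using psi_gen gen_in_K by (auto intro!: image_eqI[of _ _ "gen k"])
    qed
  qed
qed

theorem derived_quotient_iso: "M \<cong> F"
  using group_hom.FactGroup_iso[OF psi_group_hom] psi_surj kernel_psi by simp

theorem second_derived_ne: "K2 \<noteq> K"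
proof
  assume "K2 = K"
  then have "psi m (xgen 1) = 0" using psi_K2 xgen_in_K m_pos by simp
  then show False using psi_xgen[of 1] m_pos by simp
qed

end

theorem corollary1p3:
  fixes m :: nat
  assumes "m \<ge> 1"
  shows "((twin_group (m + 2))\<lparr>carrier := derived (twin_group (m + 2)) (carrier (twin_group (m + 2)))\<rparr>
            Mod derived (twin_group (m + 2)) (derived (twin_group (m + 2)) (carrier (twin_group (m + 2)))))
           \<cong> free_Abelian_group {..<2 * m - 1}
       \<and> derived (twin_group (m + 2)) (derived (twin_group (m + 2)) (carrier (twin_group (m + 2))))
           \<noteq> derived (twin_group (m + 2)) (carrier (twin_group (m + 2)))"
proof -
  interpret twin m "m + 2" by unfold_locales (use assms in auto)
  show ?thesis using derived_quotient_iso second_derived_ne by blast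
qed

end
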